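(* Let $n\ge 2$. Every strongly connected closed simplicial complex of dimension $n$ of type $\{3,4\}$ is spherical, i.e. its geometric realization is homeomorphic to the $n$-sphere.
   Context: An (abstract) simplicial complex of dimension $n$ is a family of finite nonempty sets closed under taking nonempty subsets and under nonempty intersections, whose maximal members ($n$-faces) all have cardinality $n+1$. It is closed if every $(n-1)$-face lies in exactly two $n$-faces, and strongly connected if any two $n$-faces can be joined by a sequence of $n$-faces in which consecutive ones share an $(n-1)$-face. It is of type $\{3,4\}$ if every $(n-2)$-face lies in exactly $3$ or $4$ $n$-faces. *)

theory Defs
  imports "HOL-Analysis.Analysis"
begin

definition simplicial_complex :: "'v set set \<Rightarrow> bool" where
  "simplicial_complex K \<longleftrightarrow>
     (\<forall>\<sigma>\<in>K. finite \<sigma> \<and> \<sigma> \<noteq> {}) \<and>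
     (\<forall>\<sigma>\<in>K. \<forall>\<tau>. \<tau> \<subseteq> \<sigma> \<and> \<tau> \<noteq> {} \<longrightarrow> \<tau> \<in> K) \<and>
     (\<forall>\<sigma>\<in>K. \<forall>\<tau>\<in>K. \<sigma> \<inter> \<tau> \<noteq> {} \<longrightarrow> \<sigma> \<inter> \<tau> \<in> K)"

definition facet :: "'v set set \<Rightarrow> 'v set \<Rightarrow> bool" where
  "facet K \<sigma> \<longleftrightarrow> \<sigma> \<in> K \<and> (\<forall>\<tau>\<in>K. \<sigma> \<subseteq> \<tau> \<longrightarrow> \<tau> = \<sigma>)"

definition sc_of_dim :: "'v set set \<Rightarrow> nat \<Rightarrow> bool" where
  "sc_of_dim K n \<longleftrightarrow> simplicial_complex K \<and> K \<noteq> {} \<and>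
     (\<forall>\<sigma>\<in>K. card \<sigma> \<le> n + 1) \<and> (\<forall>\<sigma>. facet K \<sigma> \<longrightarrow> card \<sigma> = n + 1)"

definition n_faces_containing :: "'v set set \<Rightarrow> nat \<Rightarrow> 'v set \<Rightarrow> 'v set set" where
  "n_faces_containing K n \<tau> = {\<sigma>\<in>K. card \<sigma> = n + 1 \<and> \<tau> \<subseteq> \<sigma>}"

definition closed_complex :: "'v set set \<Rightarrow> nat \<Rightarrow> bool" where
  "closed_complex K n \<longleftrightarrow>
     (\<forall>\<tau>\<in>K. card \<tau> = n \<longrightarrow> card (n_faces_containing K n \<tau>) = 2)"

definition adjacent_facets :: "'v set set \<Rightarrow> nat \<Rightarrow> 'v set \<Rightarrow> 'v set \<Rightarrow> bool" where
  "adjacent_facets K n \<sigma> \<tau> \<longleftrightarrow>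
     \<sigma> \<in> K \<and> \<tau> \<in> K \<and> card \<sigma> = n + 1 \<and> card \<tau> = n + 1 \<and> card (\<sigma> \<inter> \<tau>) = n"

definition strongly_connected :: "'v set set \<Rightarrow> nat \<Rightarrow> bool" where
  "strongly_connected K n \<longleftrightarrow>
     (\<forall>\<sigma>\<in>K. \<forall>\<tau>\<in>K. card \<sigma> = n + 1 \<and> card \<tau> = n + 1 \<longrightarrow>
        (adjacent_facets K n)\<^sup>*\<^sup>* \<sigma> \<tau>)"

definition type_3_4 :: "'v set set \<Rightarrow> nat \<Rightarrow> bool" where
  "type_3_4 K n \<longleftrightarrow>
     (\<forall>\<rho>\<in>K. card \<rho> = n - 1 \<longrightarrow> card (n_faces_containing K n \<rho>) \<in> {3, 4})"

text \<open>Geometric realization: barycentric-coordinate functions 'v \<Rightarrow> real supported on a face,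
  with the coherent (weak) topology w.r.t. the closed simplices, each carrying the
  Euclidean (product) topology.\<close>

definition gsimplex :: "'v set \<Rightarrow> ('v \<Rightarrow> real) set" where
  "gsimplex \<sigma> = {\<alpha>. (\<forall>v. 0 \<le> \<alpha> v) \<and> (\<forall>v. v \<notin> \<sigma> \<longrightarrow> \<alpha> v = 0) \<and> sum \<alpha> \<sigma> = 1}"

definition realization_set :: "'v set set \<Rightarrow> ('v \<Rightarrow> real) set" where
  "realization_set K = (\<Union>\<sigma>\<in>K. gsimplex \<sigma>)"

definition realization_open :: "'v set set \<Rightarrow> ('v \<Rightarrow> real) set \<Rightarrow> bool" where
  "realization_open K U \<longleftrightarrow> U \<subseteq> realization_set K \<and>
     (\<forall>\<sigma>\<in>K. openin (subtopology (powertop_real UNIV) (gsimplex \<sigma>)) (U \<inter> gsimplex \<sigma>))"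

lemma istopology_realization_open: "istopology (realization_open K)"
  unfolding istopology_def
proof (intro conjI allI impI)
  fix S T assume "realization_open K S" "realization_open K T"
  then show "realization_open K (S \<inter> T)"
  proof -
    have "S \<inter> T \<inter> gsimplex \<sigma> = (S \<inter> gsimplex \<sigma>) \<inter> (T \<inter> gsimplex \<sigma>)" for \<sigma> by blast
    then show ?thesis using \<open>realization_open K S\<close> \<open>realization_open K T\<close>
      unfolding realization_open_def by (simp add: openin_Int) blast
  qed
next
  fix \<F> assume A: "\<forall>S\<in>\<F>. realization_open K S"
  show "realization_open K (\<Union>\<F>)"
    unfolding realization_open_def
  proof (intro conjI ballI)
    show "\<Union>\<F> \<subseteq> realization_set K" using A by (auto simp: realization_open_def)
  next
    fix \<sigma> assume "\<sigma> \<in> K"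
    then have "\<forall>U\<in>(\<lambda>S. S \<inter> gsimplex \<sigma>) ` \<F>. openin (subtopology (powertop_real UNIV) (gsimplex \<sigma>)) U"
      using A by (auto simp: realization_open_def)
    then have "openin (subtopology (powertop_real UNIV) (gsimplex \<sigma>)) (\<Union>((\<lambda>S. S \<inter> gsimplex \<sigma>) ` \<F>))"
      by (intro openin_Union) blast
    then show "openin (subtopology (powertop_real UNIV) (gsimplex \<sigma>)) (\<Union>\<F> \<inter> gsimplex \<sigma>)"
      by (metis Int_Union2 Int_commute)
  qed
qed

definition geometric_realization :: "'v set set \<Rightarrow> ('v \<Rightarrow> real) topology" where
  "geometric_realization K = topology (realization_open K)"

end

theory Submission
  imports Defs
begin

text \<open>Fix a facet F. By closedness, every v \<in> F has an opposite vertex opp v, the vertex of the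
  other facet through the ridge F - {v}. Group the vertices F \<union> opp ` F into blocks, one for every
  apex w \<in> opp ` F, consisting of w and the vertices v with opp v = w. The type \<open>{3,4}\<close> condition
  makes exchanges of vertices inside different blocks commute, and by strong connectivity the
  facets of K are exactly the sets containing all but one vertex of every block: K is the join of
  the boundaries of the simplices spanned by the blocks. Its realization consists of the
  barycentric coordinates vanishing somewhere in every block, and the normalised differences
  \<alpha> v - \<alpha> (opp v), v \<in> F, map it continuously and bijectively onto the n-sphere; by compactness this
  is a homeomorphism.\<close>

lemma closedin_gsimplex:
  assumes "finite \<sigma>"
  shows "closedin (powertop_real UNIV) (gsimplex \<sigma>)"
proof -
  define A where "A v = {\<alpha>. \<alpha> v \<in> (if v \<in> \<sigma> then {0..} else {0::real})}" for v
  have closedin_A: "closedin (powertop_real UNIV) (A v)" for v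
  proof -
    have "closedin euclideanreal (if v \<in> \<sigma> then {0..} else {0})"
      by (simp flip: closed_closedin)
    from closedin_continuous_map_preimage[OF continuous_map_product_projection[of v UNIV] this]
    show ?thesis unfolding A_def by simp
  qed
  have "continuous_map (powertop_real UNIV) euclideanreal (\<lambda>\<alpha>. sum \<alpha> \<sigma>)"
    using assms by (intro continuous_map_sum) (auto intro: continuous_map_product_projection)
  from closedin_continuous_map_preimage[OF this, of "{1}"]
  have closedin_sum: "closedin (powertop_real UNIV) {\<alpha>. sum \<alpha> \<sigma> \<in> {1}}"
    by simp
  have "gsimplex \<sigma> = (\<Inter>v. A v) \<inter> {\<alpha>. sum \<alpha> \<sigma> \<in> {1}}"
    unfolding gsimplex_def A_def by (auto split: if_splits) (metis order_refl)
  then show ?thesis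
    using closedin_A closedin_sum by (auto intro!: closedin_Int closedin_Inter)
qed

lemma compactin_gsimplex:
  assumes "finite \<sigma>"
  shows "compactin (powertop_real UNIV) (gsimplex \<sigma>)"
proof (rule closed_compactin[OF _ _ closedin_gsimplex[OF assms]])
  show "compactin (powertop_real UNIV) (PiE UNIV (\<lambda>_. {0..1}))"
    by (simp add: compactin_PiE)
  have "\<alpha> v \<le> 1" if "\<alpha> \<in> gsimplex \<sigma>" for \<alpha> v
  proof (cases "v \<in> \<sigma>")
    case True
    then have "\<alpha> v \<le> sum \<alpha> \<sigma>"
      using that assms by (intro member_le_sum) (auto simp: gsimplex_def)
    then show ?thesis using that by (simp add: gsimplex_def)
  qed (use that in \<open>simp add: gsimplex_def\<close>)
  then show "gsimplex \<sigma> \<subseteq> PiE UNIV (\<lambda>_. {0..1})"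
    by (auto simp: gsimplex_def)
qed

lemma closedin_realization_set_diff:
  assumes "finite K" "\<And>\<sigma>. \<sigma> \<in> K \<Longrightarrow> finite \<sigma>" and U: "realization_open K U"
  shows "closedin (powertop_real UNIV) (realization_set K - U)"
proof -
  have "closedin (powertop_real UNIV) (gsimplex \<sigma> - U)" if "\<sigma> \<in> K" for \<sigma>
  proof -
    have "openin (subtopology (powertop_real UNIV) (gsimplex \<sigma>)) (U \<inter> gsimplex \<sigma>)"
      using U that unfolding realization_open_def by blast
    from closedin_diff[OF closedin_topspace this]
    have "closedin (subtopology (powertop_real UNIV) (gsimplex \<sigma>)) (gsimplex \<sigma> - U \<inter> gsimplex \<sigma>)"
      by simp
    moreover have "gsimplex \<sigma> - U \<inter> gsimplex \<sigma> = gsimplex \<sigma> - U"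
      by blast
    ultimately show ?thesis
      using closedin_trans_full closedin_gsimplex assms that by metis
  qed
  then have "closedin (powertop_real UNIV) (\<Union>\<sigma>\<in>K. gsimplex \<sigma> - U)"
    using assms by (intro closedin_Union) auto
  moreover have "(\<Union>\<sigma>\<in>K. gsimplex \<sigma> - U) = realization_set K - U"
    unfolding realization_set_def by blast
  ultimately show ?thesis
    by simp
qed

lemma geometric_realization_eq_subtopology:
  assumes "finite K" "\<And>\<sigma>. \<sigma> \<in> K \<Longrightarrow> finite \<sigma>"
  shows "geometric_realization K = subtopology (powertop_real UNIV) (realization_set K)"
  unfolding topology_eq
proof
  fix U
  have "openin (geometric_realization K) U = realization_open K U"
    unfolding geometric_realization_def by (simp add: topology_inverse'[OF istopology_realization_open])
  also have "\<dots> = openin (subtopology (powertop_real UNIV) (realization_set K)) U"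
  proof
    assume U: "realization_open K U"
    then have "closedin (powertop_real UNIV) (realization_set K - U)" "U \<subseteq> realization_set K"
      using closedin_realization_set_diff[OF assms] by (auto simp: realization_open_def)
    then show "openin (subtopology (powertop_real UNIV) (realization_set K)) U"
      unfolding openin_subtopology
      by (intro exI[of _ "UNIV - (realization_set K - U)"]) (auto simp: openin_closedin_eq double_diff)
  next
    assume "openin (subtopology (powertop_real UNIV) (realization_set K)) U"
    then obtain T where T: "openin (powertop_real UNIV) T" "U = T \<inter> realization_set K"
      unfolding openin_subtopology by blast
    then have "U \<inter> gsimplex \<sigma> = T \<inter> gsimplex \<sigma>" if "\<sigma> \<in> K" for \<sigma>
      using that unfolding realization_set_def by blast
    then show "realization_open K U"
      unfolding realization_open_def openin_subtopology using T by blast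
  qed
  finally show "openin (geometric_realization K) U
      = openin (subtopology (powertop_real UNIV) (realization_set K)) U" .
qed

lemma compactin_realization_set:
  assumes "finite K" "\<And>\<sigma>. \<sigma> \<in> K \<Longrightarrow> finite \<sigma>"
  shows "compactin (powertop_real UNIV) (realization_set K)"
  unfolding realization_set_def using assms by (intro compactin_Union) (auto intro: compactin_gsimplex)

lemma obtain_insert_of_card_Suc:
  assumes "finite A" "\<rho> \<subseteq> A" "card A = Suc (card \<rho>)"
  obtains x where "x \<notin> \<rho>" "A = insert x \<rho>"
proof -
  have "card (A - \<rho>) = 1"
    using assms by (simp add: card_Diff_subset finite_subset)
  then obtain x where "A - \<rho> = {x}"
    by (meson card_1_singletonE)
  with assms(2) that show thesis by blast
qed

locale pure_complex =
  fixes K :: "'v set set" and n :: nat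
  assumes sc_of_dim_K: "sc_of_dim K n"
begin

lemma face_finite: "\<sigma> \<in> K \<Longrightarrow> finite \<sigma>"
  using sc_of_dim_K by (simp add: sc_of_dim_def simplicial_complex_def)

lemma face_nonempty: "\<sigma> \<in> K \<Longrightarrow> \<sigma> \<noteq> {}"
  using sc_of_dim_K by (auto simp: sc_of_dim_def simplicial_complex_def)

lemma subface: "\<sigma> \<in> K \<Longrightarrow> \<tau> \<subseteq> \<sigma> \<Longrightarrow> \<tau> \<noteq> {} \<Longrightarrow> \<tau> \<in> K"
  using sc_of_dim_K unfolding sc_of_dim_def simplicial_complex_def by blast

lemma card_face_le: "\<sigma> \<in> K \<Longrightarrow> card \<sigma> \<le> n + 1"
  using sc_of_dim_K by (simp add: sc_of_dim_def)

lemma card_facet: "facet K \<sigma> \<Longrightarrow> card \<sigma> = n + 1"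
  using sc_of_dim_K by (simp add: sc_of_dim_def)

lemma complex_nonempty: "K \<noteq> {}"
  using sc_of_dim_K by (simp add: sc_of_dim_def)

lemma face_subset_facet:
  assumes "\<sigma> \<in> K"
  obtains G where "G \<in> K" "card G = n + 1" "\<sigma> \<subseteq> G"
proof -
  have "\<And>G. G \<in> K \<and> \<sigma> \<subseteq> G \<Longrightarrow> card G < n + 2"
    using card_face_le by (simp add: less_Suc_eq_le)
  then obtain G where G: "G \<in> K" "\<sigma> \<subseteq> G"
    and largest: "\<And>\<tau>. \<tau> \<in> K \<Longrightarrow> \<sigma> \<subseteq> \<tau> \<Longrightarrow> card \<tau> \<le> card G"
    using ex_has_greatest_nat[of "\<lambda>G. G \<in> K \<and> \<sigma> \<subseteq> G" \<sigma> card "n + 2"] assms by blast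
  have "facet K G"
    unfolding facet_def
  proof (intro conjI ballI impI)
    fix \<tau> assume "\<tau> \<in> K" "G \<subseteq> \<tau>"
    with G largest show "\<tau> = G"
      by (metis card_seteq face_finite order_trans)
  qed (fact G)
  with G that show thesis
    using card_facet by blast
qed

end

locale closed_pure_complex = pure_complex +
  assumes closed_K: "closed_complex K n"
begin

lemma card_ridge_facets:
  assumes "\<rho> \<in> K" "card \<rho> = n"
  shows "card (n_faces_containing K n \<rho>) = 2"
  using closed_K assms by (simp add: closed_complex_def)

lemma ridge_facets_at_most_two:
  assumes "\<rho> \<in> K" "card \<rho> = n"
    and "{A, B, C} \<subseteq> n_faces_containing K n \<rho>"
  shows "A = B \<or> A = C \<or> B = C"
proof (rule ccontr)
  assume "\<not> ?thesis"
  then have "card {A, B, C} = 3" by simp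
  moreover have "card {A, B, C} \<le> 2"
    using card_ridge_facets[OF assms(1,2)] assms(3)
    by (metis card_mono card.infinite zero_neq_numeral)
  ultimately show False by simp
qed

lemma ridge_other_facet:
  assumes "\<rho> \<in> K" "card \<rho> = n" "A \<in> n_faces_containing K n \<rho>"
  obtains B where "B \<in> n_faces_containing K n \<rho>" "B \<noteq> A"
proof -
  have "card (n_faces_containing K n \<rho>) = 2"
    using card_ridge_facets[OF assms(1,2)] .
  with assms(3) have "card (n_faces_containing K n \<rho> - {A}) = 1"
    by (simp add: card_Diff_singleton_if)
  then show thesis
    using that by (metis Diff_iff card_1_singletonE singletonI)
qed

lemma ex_opposite_vertices:
  assumes "F \<in> K" "card F = n + 1" "n \<noteq> 0"
  obtains opp where "\<And>v. v \<in> F \<Longrightarrow> opp v \<notin> F" "\<And>v. v \<in> F \<Longrightarrow> insert (opp v) (F - {v}) \<in> K"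
proof -
  have "\<exists>x. x \<notin> F \<and> insert x (F - {v}) \<in> K" if v: "v \<in> F" for v
  proof -
    have "finite F"
      using assms face_finite by blast
    then have card_ridge: "card (F - {v}) = n"
      using assms v by simp
    then have "F - {v} \<in> K"
      using subface[OF assms(1)] assms(3) by (metis Diff_subset card.empty)
    moreover have "F \<in> n_faces_containing K n (F - {v})"
      using assms by (auto simp: n_faces_containing_def)
    ultimately obtain B where B: "B \<in> n_faces_containing K n (F - {v})" "B \<noteq> F"
      using ridge_other_facet card_ridge by blast
    then obtain x where "x \<notin> F - {v}" "B = insert x (F - {v})"
      using obtain_insert_of_card_Suc[of B "F - {v}"] card_ridge face_finite
      by (auto simp: n_faces_containing_def)
    moreover have "x \<noteq> v"
      using B calculation v by (metis insert_Diff)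
    ultimately show ?thesis
      using B(1) by (auto simp: n_faces_containing_def)
  qed
  then obtain opp where "\<forall>v\<in>F. opp v \<notin> F \<and> insert (opp v) (F - {v}) \<in> K"
    by metis
  with that show thesis by blast
qed

end

locale closed_complex_3_4 = closed_pure_complex +
  assumes two_le_n: "2 \<le> n" and type_3_4_K: "type_3_4 K n"
begin

lemma codim2_facet_among_four:
  assumes "\<rho> \<in> K" "card \<rho> = n - 1"
    and "{A, B, C, D, E} \<subseteq> n_faces_containing K n \<rho>" "card {A, B, C, D} = 4"
  shows "E \<in> {A, B, C, D}"
proof -
  have "card (n_faces_containing K n \<rho>) \<in> {3, 4}"
    using type_3_4_K assms(1,2) by (simp add: type_3_4_def)
  then have "finite (n_faces_containing K n \<rho>)" "card (n_faces_containing K n \<rho>) \<le> 4"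
    using card.infinite by fastforce+
  with assms(3,4) have "{A, B, C, D} = n_faces_containing K n \<rho>"
    by (intro card_seteq) auto
  with assms(3) show ?thesis
    by blast
qed

text \<open>The four facets through G - {u, v} are G, the two single exchanges of G and one more facet;
  the latter contains both new vertices, hence is the double exchange.\<close>

lemma double_exchange_face:
  assumes G: "G \<in> K" "card G = n + 1" and uv: "u \<in> G" "v \<in> G" "u \<noteq> v"
    and new: "m \<notin> G" "m' \<notin> G" "m \<noteq> m'"
    and exchanges: "insert m (G - {v}) \<in> K" "insert m' (G - {u}) \<in> K"
  shows "insert m' (insert m (G - {u, v})) \<in> K"
proof -
  define R where "R = G - {u, v}"
  define G' where "G' = insert m (G - {v})"
  define H where "H = insert m' (G - {u})"
  have "finite G"
    using G face_finite by blast
  then have "card R = n - 1" "finite R"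
    using G uv by (simp_all add: R_def card_Diff_subset)
  moreover have "m \<notin> R" "m' \<notin> R"
    using new by (auto simp: R_def)
  ultimately have card_m_R: "card (insert m R) = n" and card_m'_R: "card (insert m' R) = n"
    and card_m'_m_R: "card (insert m' (insert m R)) = n + 1"
    using two_le_n new by simp_all
  have "R \<noteq> {}"
    using \<open>card R = n - 1\<close> two_le_n by auto
  then have "R \<in> K"
    using subface[OF G(1)] by (auto simp: R_def)
  have facets: "G \<in> n_faces_containing K n R" "G' \<in> n_faces_containing K n (insert m R)"
    "H \<in> n_faces_containing K n (insert m' R)"
    using G exchanges uv new \<open>finite G\<close>
    by (auto simp: n_faces_containing_def R_def G'_def H_def card_insert_if)
  then have "insert m R \<in> K" "insert m' R \<in> K"
    by (auto simp: n_faces_containing_def intro: subface)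
  obtain X where X: "X \<in> n_faces_containing K n (insert m R)" "X \<noteq> G'"
    using ridge_other_facet[OF \<open>insert m R \<in> K\<close> card_m_R facets(2)] .
  obtain Y where Y: "Y \<in> n_faces_containing K n (insert m' R)" "Y \<noteq> H"
    using ridge_other_facet[OF \<open>insert m' R \<in> K\<close> card_m'_R facets(3)] .
  have "m \<in> X"
    using X(1) by (simp add: n_faces_containing_def)
  then have "G \<noteq> G'" "G \<noteq> H" "G \<noteq> X" "G' \<noteq> H" "H \<noteq> X"
    using new uv by (auto simp: G'_def H_def)
  then have "card {G, G', H, X} = 4"
    using X(2) by auto
  with \<open>R \<in> K\<close> \<open>card R = n - 1\<close> have "Y \<in> {G, G', H, X}"
    using facets X(1) Y(1)
    by (intro codim2_facet_among_four) (auto simp: n_faces_containing_def)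
  moreover have "Y \<noteq> G" "Y \<noteq> G'"
    using Y(1) new by (auto simp: G'_def n_faces_containing_def)
  ultimately have "Y = X"
    using Y(2) by simp
  then have "insert m' (insert m R) \<subseteq> X" "X \<in> K" "card X = n + 1"
    using X(1) Y(1) by (auto simp: n_faces_containing_def)
  then have "insert m' (insert m R) = X"
    using card_seteq[of X "insert m' (insert m R)"] card_m'_m_R face_finite by simp
  then show ?thesis
    using \<open>X \<in> K\<close> by (simp add: R_def)
qed

end

locale block_frame = closed_complex_3_4 +
  fixes F :: "'v set" and opp :: "'v \<Rightarrow> 'v"
  assumes strongly_connected_K: "strongly_connected K n"
    and F_face: "F \<in> K" and card_F: "card F = n + 1"
    and opp_notin: "v \<in> F \<Longrightarrow> opp v \<notin> F"
    and opp_exchange: "v \<in> F \<Longrightarrow> insert (opp v) (F - {v}) \<in> K"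
begin

definition "apexes = opp ` F"

definition "frame = F \<union> apexes"

definition "apex b = (if b \<in> F then opp b else b)"

definition "block w = {b \<in> frame. apex b = w}"

definition "block_facet G \<longleftrightarrow> G \<subseteq> frame \<and> (\<forall>w\<in>apexes. \<exists>!m. m \<in> block w \<and> m \<notin> G)"

definition "exchange_closed G \<longleftrightarrow> G \<in> K \<and> card G = n + 1 \<and> block_facet G \<and>
   (\<forall>v\<in>G. \<forall>m\<in>block (apex v). m \<notin> G \<longrightarrow> insert m (G - {v}) \<in> K)"

lemma finite_F: "finite F"
  using F_face face_finite by blast

lemma finite_frame: "finite frame"
  using finite_F by (simp add: frame_def apexes_def)

lemma apexes_disjoint_F: "apexes \<inter> F = {}"
  using opp_notin by (auto simp: apexes_def)

lemma apex_in_apexes: "b \<in> frame \<Longrightarrow> apex b \<in> apexes"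
  by (auto simp: frame_def apex_def apexes_def)

lemma apex_apex: "w \<in> apexes \<Longrightarrow> apex w = w"
  using apexes_disjoint_F by (auto simp: apex_def)

lemma apex_opp: "v \<in> F \<Longrightarrow> apex v = opp v" "v \<in> F \<Longrightarrow> apex (opp v) = opp v"
  using apex_apex by (auto simp: apex_def apexes_def)

lemma in_block_apex: "b \<in> frame \<Longrightarrow> b \<in> block (apex b)"
  by (simp add: block_def)

lemma apex_in_block: "w \<in> apexes \<Longrightarrow> w \<in> block w"
  using apex_apex by (simp add: block_def frame_def)

lemma block_subset_frame: "block w \<subseteq> frame"
  by (auto simp: block_def)

lemma apex_of_block: "b \<in> block w \<Longrightarrow> apex b = w"
  by (simp add: block_def)

lemma opp_in_block: "v \<in> F \<Longrightarrow> opp v \<in> block (apex v)"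
  using apex_opp by (auto simp: block_def frame_def apexes_def)

lemma block_facet_missing_unique:
  assumes "block_facet G" "x \<in> block w" "x \<notin> G" "y \<in> block w" "y \<notin> G"
  shows "x = y"
proof -
  have "w \<in> apexes"
    using assms(2) apex_in_apexes apex_of_block block_subset_frame by blast
  with assms show ?thesis
    unfolding block_facet_def by blast
qed

lemma block_facet_exchange:
  assumes G: "block_facet G" and v: "v \<in> G" and m: "m \<in> block (apex v)" "m \<notin> G"
  shows "block_facet (insert m (G - {v}))"
  unfolding block_facet_def
proof (intro conjI ballI)
  have "G \<subseteq> frame"
    using G by (simp add: block_facet_def)
  then show "insert m (G - {v}) \<subseteq> frame"
    using m(1) block_subset_frame by blast
  fix w assume w: "w \<in> apexes"
  show "\<exists>!x. x \<in> block w \<and> x \<notin> insert m (G - {v})"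
  proof (cases "w = apex v")
    case True
    have "v \<in> block w"
      using \<open>G \<subseteq> frame\<close> v True in_block_apex by blast
    moreover have "v \<notin> insert m (G - {v})"
      using m(2) v by blast
    moreover have "x = v" if x: "x \<in> block w" "x \<notin> insert m (G - {v})" for x
    proof (rule ccontr)
      assume "x \<noteq> v"
      with x have "x \<notin> G" "x \<noteq> m" by auto
      with block_facet_missing_unique[OF G x(1) \<open>x \<notin> G\<close>] m True show False
        by blast
    qed
    ultimately show ?thesis by blast
  next
    case False
    obtain x where x: "x \<in> block w" "x \<notin> G"
      using G w unfolding block_facet_def by blast
    have "m \<notin> block w" "v \<notin> block w"
      using m False apex_of_block by blast+
    with x block_facet_missing_unique[OF G _ _ x] show ?thesis
      by blast
  qed
qed

lemma exchange_closed_F: "exchange_closed F"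
proof -
  have "block_facet F"
    unfolding block_facet_def
  proof (intro conjI ballI)
    show "F \<subseteq> frame" by (simp add: frame_def)
    fix w assume w: "w \<in> apexes"
    have "m = w" if "m \<in> block w" "m \<notin> F" for m
    proof -
      have "m \<in> apexes"
        using that block_subset_frame by (auto simp: frame_def)
      with that(1) show ?thesis
        using apex_apex apex_of_block by force
    qed
    moreover have "w \<in> block w" "w \<notin> F"
      using w apex_in_block apexes_disjoint_F by blast+
    ultimately show "\<exists>!m. m \<in> block w \<and> m \<notin> F"
      by blast
  qed
  moreover have "insert m (F - {v}) \<in> K"
    if "v \<in> F" "m \<in> block (apex v)" "m \<notin> F" for v m
  proof -
    have "m = opp v"
      using block_facet_missing_unique[OF \<open>block_facet F\<close> that(2,3) opp_in_block] that(1) opp_notin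
      by blast
    with that(1) show ?thesis
      using opp_exchange by blast
  qed
  ultimately show ?thesis
    using F_face card_F by (simp add: exchange_closed_def)
qed

lemma exchange_closed_exchange_of_exchange:
  assumes I: "exchange_closed G" and v: "v \<in> G" and m: "m \<in> block (apex v)" "m \<notin> G"
    and u: "u \<in> insert m (G - {v})"
    and m': "m' \<in> block (apex u)" "m' \<notin> insert m (G - {v})"
  shows "insert m' (insert m (G - {v}) - {u}) \<in> K"
proof -
  have G: "G \<in> K" "card G = n + 1" "block_facet G"
    and exchange: "\<And>u m'. u \<in> G \<Longrightarrow> m' \<in> block (apex u) \<Longrightarrow> m' \<notin> G \<Longrightarrow> insert m' (G - {u}) \<in> K"
    using I by (auto simp: exchange_closed_def)
  show ?thesis
  proof (cases "apex u = apex v")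
    case True
    have "v \<in> block (apex u)" "v \<notin> insert m (G - {v})"
      using G(3) v m(2) True in_block_apex by (auto simp: block_facet_def)
    then have "m' = v"
      using block_facet_missing_unique[OF block_facet_exchange[OF G(3) v m] m'] by blast
    show ?thesis
    proof (cases "u = m")
      case True
      then show ?thesis
        using \<open>m' = v\<close> v m(2) G(1) insert_Diff by fastforce
    next
      case False
      then have "u \<in> G" "insert m' (insert m (G - {v}) - {u}) = insert m (G - {u})"
        using u \<open>m' = v\<close> v by auto
      then show ?thesis
        using exchange[of u m] m \<open>apex u = apex v\<close> by simp
    qed
  next
    case False
    then have "u \<noteq> m" "m' \<noteq> v" "m' \<noteq> m"
      using m(1) m'(1) apex_of_block by metis+
    then have "u \<in> G" "u \<noteq> v" "m' \<notin> G"
      and "insert m' (insert m (G - {v}) - {u}) = insert m' (insert m (G - {u, v}))"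
      using u m'(2) by auto
    then show ?thesis
      using double_exchange_face[OF G(1,2) \<open>u \<in> G\<close> v \<open>u \<noteq> v\<close> m(2) \<open>m' \<notin> G\<close> \<open>m' \<noteq> m\<close>[symmetric]
          exchange[OF v m] exchange[OF \<open>u \<in> G\<close> m'(1) \<open>m' \<notin> G\<close>]]
      by simp
  qed
qed

lemma exchange_closed_exchange:
  assumes I: "exchange_closed G" and v: "v \<in> G" and m: "m \<in> block (apex v)" "m \<notin> G"
  shows "exchange_closed (insert m (G - {v}))"
proof -
  have G: "G \<in> K" "card G = n + 1" "block_facet G"
    using I by (auto simp: exchange_closed_def)
  then have "card (insert m (G - {v})) = n + 1"
    using face_finite v m(2) by simp
  moreover have "insert m (G - {v}) \<in> K"
    using I v m by (simp add: exchange_closed_def)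
  ultimately show ?thesis
    unfolding exchange_closed_def
    using block_facet_exchange[OF G(3) v m] exchange_closed_exchange_of_exchange[OF I v m] by blast
qed

text \<open>Across the ridge G - {v} the only other facet is an exchange inside the block of v.\<close>

lemma exchange_closed_adjacent:
  assumes I: "exchange_closed G" and adj: "adjacent_facets K n G G2"
  shows "exchange_closed G2"
proof -
  have G: "G \<in> K" "card G = n + 1" "block_facet G"
    using I by (auto simp: exchange_closed_def)
  have G2: "G2 \<in> K" "card G2 = n + 1" and card_ridge: "card (G \<inter> G2) = n"
    using adj by (auto simp: adjacent_facets_def)
  have "finite G"
    using G(1) face_finite by blast
  then obtain v where v: "v \<notin> G \<inter> G2" "G = insert v (G \<inter> G2)"
    using obtain_insert_of_card_Suc[of G "G \<inter> G2"] G(2) card_ridge by auto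
  then have "v \<in> G" and ridge: "G \<inter> G2 = G - {v}"
    by auto
  then have "apex v \<in> apexes"
    using G(3) apex_in_apexes by (auto simp: block_facet_def)
  then obtain m where m: "m \<in> block (apex v)" "m \<notin> G"
    using G(3) unfolding block_facet_def by blast
  have exchange: "insert m (G - {v}) \<in> K"
    using I \<open>v \<in> G\<close> m by (auto simp: exchange_closed_def)
  have "G \<inter> G2 \<noteq> {}"
    using card_ridge two_le_n by auto
  then have "G \<inter> G2 \<in> K"
    using subface[OF G(1)] by blast
  moreover have "{G, insert m (G - {v}), G2} \<subseteq> n_faces_containing K n (G \<inter> G2)"
    using G G2 exchange \<open>finite G\<close> \<open>v \<in> G\<close> m(2) ridge by (auto simp: n_faces_containing_def)
  ultimately have "G = insert m (G - {v}) \<or> G = G2 \<or> insert m (G - {v}) = G2"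
    by (rule ridge_facets_at_most_two[OF _ card_ridge])
  moreover have "G \<noteq> G2" "G \<noteq> insert m (G - {v})"
    using card_ridge G(2) m(2) by auto
  ultimately have "insert m (G - {v}) = G2"
    by blast
  with exchange_closed_exchange[OF I \<open>v \<in> G\<close> m] show ?thesis
    by simp
qed

lemma facet_imp_exchange_closed:
  assumes "G \<in> K" "card G = n + 1"
  shows "exchange_closed G"
proof -
  have "(adjacent_facets K n)\<^sup>*\<^sup>* F G"
    using strongly_connected_K assms F_face card_F by (simp add: strongly_connected_def)
  then show ?thesis
    by (induction rule: rtranclp_induct) (auto intro: exchange_closed_F exchange_closed_adjacent)
qed

lemma block_facet_without_apexes:
  assumes G: "block_facet G" and "G \<inter> apexes = {}"
  shows "G = F"
proof
  have "G \<subseteq> frame"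
    using G by (simp add: block_facet_def)
  with \<open>G \<inter> apexes = {}\<close> show "G \<subseteq> F"
    by (auto simp: frame_def)
  show "F \<subseteq> G"
  proof
    fix v assume v: "v \<in> F"
    show "v \<in> G"
    proof (rule ccontr)
      assume "v \<notin> G"
      moreover have "opp v \<notin> G"
        using v \<open>G \<inter> apexes = {}\<close> by (auto simp: apexes_def)
      moreover have "v \<in> block (apex v)"
        using v in_block_apex by (simp add: frame_def)
      ultimately have "v = opp v"
        using block_facet_missing_unique[OF G] opp_in_block[OF v] by blast
      with v opp_notin show False by metis
    qed
  qed
qed

text \<open>Induction on the number of apexes in G: exchanging an apex w \<in> G for the missing vertex of
  its block, which lies in F, removes one apex.\<close>

lemma block_facet_imp_exchange_closed: "block_facet G \<Longrightarrow> exchange_closed G"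
proof (induction "card (G \<inter> apexes)" arbitrary: G)
  case 0
  then have "G \<inter> apexes = {}"
    using finite_frame by (metis block_facet_def card_0_eq finite_Int finite_subset)
  with 0 show ?case
    using block_facet_without_apexes exchange_closed_F by blast
next
  case (Suc k)
  have "G \<subseteq> frame"
    using Suc.prems by (simp add: block_facet_def)
  obtain w where w: "w \<in> G" "w \<in> apexes"
    using Suc.hyps(2) by (metis card.empty disjoint_iff nat.distinct(1))
  then obtain m where m: "m \<in> block w" "m \<notin> G"
    using Suc.prems unfolding block_facet_def by blast
  have "m \<notin> apexes"
    using m w apex_apex apex_of_block by metis
  then have "m \<in> F"
    using m(1) block_subset_frame by (auto simp: frame_def)
  define G0 where "G0 = insert m (G - {w})"
  have "block_facet G0"
    unfolding G0_def using block_facet_exchange[OF Suc.prems w(1) _ m(2)] m(1) w(2) apex_apex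
    by simp
  moreover have "G0 \<inter> apexes = G \<inter> apexes - {w}"
    using \<open>m \<in> F\<close> apexes_disjoint_F by (auto simp: G0_def)
  then have "k = card (G0 \<inter> apexes)"
    using Suc.hyps(2) w finite_frame \<open>G \<subseteq> frame\<close>
    by (metis IntI card_Diff_singleton diff_Suc_1 finite_Int finite_subset)
  ultimately have "exchange_closed G0"
    using Suc.hyps(1) by blast
  moreover have "w \<in> block (apex m)" "w \<notin> G0" "m \<in> G0"
    using m w apex_of_block apex_in_block by (auto simp: G0_def)
  moreover have "insert w (G0 - {m}) = G"
    using m w by (auto simp: G0_def)
  ultimately show ?case
    using exchange_closed_exchange by metis
qed

lemma face_iff_block_facet: "\<sigma> \<in> K \<longleftrightarrow> \<sigma> \<noteq> {} \<and> (\<exists>G. block_facet G \<and> \<sigma> \<subseteq> G)"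
proof
  assume "\<sigma> \<in> K"
  then obtain G where "G \<in> K" "card G = n + 1" "\<sigma> \<subseteq> G"
    by (rule face_subset_facet)
  with \<open>\<sigma> \<in> K\<close> show "\<sigma> \<noteq> {} \<and> (\<exists>G. block_facet G \<and> \<sigma> \<subseteq> G)"
    using facet_imp_exchange_closed face_nonempty by (auto simp: exchange_closed_def)
next
  assume "\<sigma> \<noteq> {} \<and> (\<exists>G. block_facet G \<and> \<sigma> \<subseteq> G)"
  then obtain G where "\<sigma> \<noteq> {}" "\<sigma> \<subseteq> G" "block_facet G"
    by blast
  moreover from \<open>block_facet G\<close> have "G \<in> K"
    using block_facet_imp_exchange_closed exchange_closed_def by blast
  ultimately show "\<sigma> \<in> K"
    using subface by blast
qed

lemma finite_complex: "finite K"
proof -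
  have "K \<subseteq> Pow frame"
  proof
    fix \<sigma> assume "\<sigma> \<in> K"
    then obtain G where "block_facet G" "\<sigma> \<subseteq> G"
      using face_iff_block_facet by blast
    then show "\<sigma> \<in> Pow frame"
      by (auto simp: block_facet_def)
  qed
  then show ?thesis
    using finite_frame finite_subset by blast
qed

definition "block_realization = {\<alpha>. (\<forall>v. 0 \<le> \<alpha> v) \<and> (\<forall>v. v \<notin> frame \<longrightarrow> \<alpha> v = 0) \<and>
   sum \<alpha> frame = 1 \<and> (\<forall>w\<in>apexes. \<exists>b\<in>block w. \<alpha> b = (0::real))}"

lemma realization_set_subset: "realization_set K \<subseteq> block_realization"
proof
  fix \<alpha> assume "\<alpha> \<in> realization_set K"
  then obtain \<sigma> where "\<sigma> \<in> K" and \<alpha>: "\<alpha> \<in> gsimplex \<sigma>"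
    by (auto simp: realization_set_def)
  then obtain G where G: "block_facet G" "\<sigma> \<subseteq> G"
    using face_iff_block_facet by blast
  then have "G \<subseteq> frame"
    by (simp add: block_facet_def)
  have "sum \<alpha> frame = sum \<alpha> \<sigma>"
    using \<alpha> G \<open>G \<subseteq> frame\<close> finite_frame by (intro sum.mono_neutral_right) (auto simp: gsimplex_def)
  moreover have "\<exists>b\<in>block w. \<alpha> b = 0" if "w \<in> apexes" for w
  proof -
    obtain b where "b \<in> block w" "b \<notin> G"
      using G \<open>w \<in> apexes\<close> unfolding block_facet_def by blast
    with \<alpha> G show ?thesis
      by (auto simp: gsimplex_def)
  qed
  ultimately show "\<alpha> \<in> block_realization"
    using \<alpha> G \<open>G \<subseteq> frame\<close> by (auto simp: block_realization_def gsimplex_def)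
qed

lemma block_facet_frame_diff_transversal:
  assumes z: "\<And>w. w \<in> apexes \<Longrightarrow> z w \<in> block w"
  shows "block_facet (frame - z ` apexes)"
  unfolding block_facet_def
proof (intro conjI ballI)
  show "frame - z ` apexes \<subseteq> frame"
    by blast
  fix w assume w: "w \<in> apexes"
  have unique: "x = z w" if x: "x \<in> block w" "x \<notin> frame - z ` apexes" for x
  proof -
    have "x \<in> z ` apexes"
      using x block_subset_frame by blast
    then obtain w' where w': "w' \<in> apexes" "x = z w'"
      by blast
    then have "apex x = w'"
      using apex_of_block[OF z[OF w'(1)]] by simp
    moreover have "apex x = w"
      using x(1) by (rule apex_of_block)
    ultimately show ?thesis
      using w'(2) by blast
  qed
  show "\<exists>!m. m \<in> block w \<and> m \<notin> frame - z ` apexes"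
  proof (rule ex1I)
    show "z w \<in> block w \<and> z w \<notin> frame - z ` apexes"
      using z[OF w] w by simp
  qed (use unique in blast)
qed

text \<open>A point of the block realization lies in the simplex of its support, which misses a
  chosen zero of every block.\<close>

lemma block_realization_subset: "block_realization \<subseteq> realization_set K"
proof
  fix \<alpha> assume \<alpha>: "\<alpha> \<in> block_realization"
  then have "\<forall>w\<in>apexes. \<exists>b. b \<in> block w \<and> \<alpha> b = 0"
    by (auto simp: block_realization_def)
  from bchoice[OF this] obtain z where z: "\<forall>w\<in>apexes. z w \<in> block w \<and> \<alpha> (z w) = 0"
    by blast
  define \<sigma> where "\<sigma> = {v \<in> frame. \<alpha> v \<noteq> 0}"
  have "\<sigma> \<subseteq> frame - z ` apexes"
    using z by (auto simp: \<sigma>_def)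
  moreover have "sum \<alpha> \<sigma> = 1"
  proof -
    have "sum \<alpha> \<sigma> = sum \<alpha> frame"
      unfolding \<sigma>_def using finite_frame by (intro sum.mono_neutral_left) auto
    with \<alpha> show ?thesis
      by (simp add: block_realization_def)
  qed
  moreover have "\<sigma> \<noteq> {}"
    using \<open>sum \<alpha> \<sigma> = 1\<close> by auto
  moreover have "block_facet (frame - z ` apexes)"
    using z by (intro block_facet_frame_diff_transversal) blast
  ultimately have "\<sigma> \<in> K"
    using face_iff_block_facet by blast
  moreover have "\<alpha> \<in> gsimplex \<sigma>"
    using \<alpha> \<open>sum \<alpha> \<sigma> = 1\<close> by (auto simp: gsimplex_def block_realization_def \<sigma>_def)
  ultimately show "\<alpha> \<in> realization_set K"
    by (auto simp: realization_set_def)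
qed

lemma realization_set_eq: "realization_set K = block_realization"
  using realization_set_subset block_realization_subset by blast

lemma constant_on_blocks:
  assumes "\<And>v. v \<in> F \<Longrightarrow> \<gamma> v = \<gamma> (opp v)" "b \<in> frame"
  shows "\<gamma> b = \<gamma> (apex b)"
  using assms by (simp add: apex_def)

lemma block_realization_differences_nonzero:
  assumes "\<alpha> \<in> block_realization"
  shows "\<exists>v\<in>F. \<alpha> v \<noteq> \<alpha> (opp v)"
proof (rule ccontr)
  assume "\<not> ?thesis"
  then have const: "\<alpha> b = \<alpha> (apex b)" if "b \<in> frame" for b
    using constant_on_blocks that by blast
  have "\<alpha> b = 0" if b: "b \<in> frame" for b
  proof -
    obtain c where c: "c \<in> block (apex b)" "\<alpha> c = 0"
      using assms apex_in_apexes[OF b] by (auto simp: block_realization_def)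
    then have "\<alpha> c = \<alpha> (apex b)"
      using const[of c] block_subset_frame apex_of_block by auto
    with b c(2) show ?thesis
      using const by simp
  qed
  then have "sum \<alpha> frame = 0"
    by simp
  with assms show False
    by (simp add: block_realization_def)
qed

text \<open>On a block, \<alpha> - t \<beta> is constant; it is \<le> 0 at a zero of \<alpha> and \<ge> 0 at a zero of \<beta>, hence
  vanishes, and then the normalisation forces t = 1.\<close>

lemma block_realization_eq_if_differences_proportional:
  assumes \<alpha>: "\<alpha> \<in> block_realization" and \<beta>: "\<beta> \<in> block_realization" and "t > 0"
    and proportional: "\<And>v. v \<in> F \<Longrightarrow> \<alpha> v - \<alpha> (opp v) = t * (\<beta> v - \<beta> (opp v))"
  shows "\<alpha> = \<beta>"
proof -
  define \<gamma> where "\<gamma> v = \<alpha> v - t * \<beta> v" for v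
  have "\<gamma> v = \<gamma> (opp v)" if "v \<in> F" for v
    using proportional[OF that] by (simp add: \<gamma>_def algebra_simps)
  then have const: "\<gamma> b = \<gamma> w" if "b \<in> block w" for b w
    using constant_on_blocks[of \<gamma> b] that block_subset_frame apex_of_block by blast
  have "\<gamma> w = 0" if w: "w \<in> apexes" for w
  proof -
    obtain c where c: "c \<in> block w" "\<alpha> c = 0"
      using \<alpha> w by (auto simp: block_realization_def)
    obtain c' where c': "c' \<in> block w" "\<beta> c' = 0"
      using \<beta> w by (auto simp: block_realization_def)
    have "0 \<le> t * \<beta> c"
      using \<beta> \<open>t > 0\<close> by (simp add: block_realization_def)
    then have "\<gamma> w \<le> 0"
      using const[OF c(1)] c(2) by (simp add: \<gamma>_def)
    moreover have "0 \<le> \<alpha> c'"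
      using \<alpha> by (simp add: block_realization_def)
    then have "\<gamma> w \<ge> 0"
      using const[OF c'(1)] c'(2) by (simp add: \<gamma>_def)
    ultimately show ?thesis
      by simp
  qed
  then have on_frame: "\<alpha> b = t * \<beta> b" if "b \<in> frame" for b
    using const[OF in_block_apex[OF that]] apex_in_apexes[OF that] by (simp add: \<gamma>_def)
  then have "sum \<alpha> frame = t * sum \<beta> frame"
    by (simp add: sum_distrib_left)
  then have "t = 1"
    using \<alpha> \<beta> by (simp add: block_realization_def)
  show ?thesis
  proof
    fix v show "\<alpha> v = \<beta> v"
    proof (cases "v \<in> frame")
      case True
      then show ?thesis using on_frame \<open>t = 1\<close> by simp
    next
      case False
      then show ?thesis using \<alpha> \<beta> by (simp add: block_realization_def)
    qed
  qed
qed

text \<open>Subtract from y its minimum over each block.\<close>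

lemma ex_block_weights_with_differences:
  fixes y :: "'v \<Rightarrow> real"
  obtains \<alpha> where "\<And>v. \<alpha> v \<ge> 0" "\<And>v. v \<notin> frame \<Longrightarrow> \<alpha> v = 0"
    "\<And>w. w \<in> apexes \<Longrightarrow> \<exists>b\<in>block w. \<alpha> b = 0" "\<And>v. v \<in> F \<Longrightarrow> \<alpha> v - \<alpha> (opp v) = y v"
proof -
  define y' where "y' v = (if v \<in> F then y v else 0)" for v
  define \<alpha> where "\<alpha> v = (if v \<in> frame then y' v - Min (y' ` block (apex v)) else 0)" for v
  have finite_block: "finite (block w)" for w
    using block_subset_frame finite_frame finite_subset by blast
  have "\<alpha> v \<ge> 0" for v
  proof (cases "v \<in> frame")
    case True
    then have "Min (y' ` block (apex v)) \<le> y' v"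
      using in_block_apex finite_block by (intro Min_le) auto
    with True show ?thesis
      by (simp add: \<alpha>_def)
  qed (simp add: \<alpha>_def)
  moreover have "\<alpha> v = 0" if "v \<notin> frame" for v
    using that by (simp add: \<alpha>_def)
  moreover have "\<exists>b\<in>block w. \<alpha> b = 0" if "w \<in> apexes" for w
  proof -
    have "Min (y' ` block w) \<in> y' ` block w"
      using apex_in_block[OF that] by (intro Min_in finite_imageI finite_block) blast
    then obtain b where b: "Min (y' ` block w) = y' b" "b \<in> block w"
      by (rule imageE)
    moreover have "b \<in> frame"
      using b(2) block_subset_frame by blast
    ultimately have "\<alpha> b = 0"
      using apex_of_block[OF b(2)] by (simp add: \<alpha>_def)
    with b(2) show ?thesis
      by blast
  qed
  moreover have "\<alpha> v - \<alpha> (opp v) = y v" if v: "v \<in> F" for v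
  proof -
    have "v \<in> frame" "opp v \<in> frame"
      using v by (auto simp: frame_def apexes_def)
    then show ?thesis
      using apex_opp[OF v] opp_notin[OF v] v by (simp add: \<alpha>_def y'_def)
  qed
  ultimately show thesis
    by (rule that)
qed

lemma block_realization_with_differences:
  fixes y :: "'v \<Rightarrow> real"
  assumes "\<exists>v\<in>F. y v \<noteq> 0"
  obtains \<alpha> s where "\<alpha> \<in> block_realization" "s > 0" "\<And>v. v \<in> F \<Longrightarrow> \<alpha> v - \<alpha> (opp v) = y v / s"
proof -
  obtain \<alpha>0 where nonneg: "\<And>v. \<alpha>0 v \<ge> 0" and off_frame: "\<And>v. v \<notin> frame \<Longrightarrow> \<alpha>0 v = 0"
    and zero: "\<And>w. w \<in> apexes \<Longrightarrow> \<exists>b\<in>block w. \<alpha>0 b = 0"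
    and differences: "\<And>v. v \<in> F \<Longrightarrow> \<alpha>0 v - \<alpha>0 (opp v) = y v"
    by (rule ex_block_weights_with_differences[of y]) blast
  define s where "s = sum \<alpha>0 frame"
  have "s \<ge> 0"
    unfolding s_def using nonneg by (simp add: sum_nonneg)
  moreover have "s \<noteq> 0"
  proof
    assume "s = 0"
    then have "\<forall>v\<in>frame. \<alpha>0 v = 0"
      using sum_nonneg_eq_0_iff[OF finite_frame, of \<alpha>0] nonneg unfolding s_def by blast
    then have "\<alpha>0 v = 0" for v
      using off_frame by (cases "v \<in> frame") auto
    moreover obtain v where "v \<in> F" "y v \<noteq> 0"
      using assms by blast
    ultimately show False
      using differences[of v] by simp
  qed
  ultimately have "s > 0"
    by simp
  have "(\<lambda>v. \<alpha>0 v / s) \<in> block_realization"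
    unfolding block_realization_def
  proof (intro CollectI conjI allI impI ballI)
    show "0 \<le> \<alpha>0 v / s" for v
      using nonneg \<open>s > 0\<close> by simp
    show "\<alpha>0 v / s = 0" if "v \<notin> frame" for v
      using off_frame[OF that] by simp
    show "(\<Sum>v\<in>frame. \<alpha>0 v / s) = 1"
      using \<open>s > 0\<close> by (simp add: s_def flip: sum_divide_distrib)
    show "\<exists>b\<in>block w. \<alpha>0 b / s = 0" if "w \<in> apexes" for w
      using zero[OF that] by auto
  qed
  moreover have "\<alpha>0 v / s - \<alpha>0 (opp v) / s = y v / s" if "v \<in> F" for v
    using differences[OF that] by (simp add: diff_divide_distrib[symmetric])
  ultimately show thesis
    using that \<open>s > 0\<close> by blast
qed

end

lemma topspace_nsphere: "topspace (nsphere n) = {x. (\<Sum>i\<le>n. (x i)\<^sup>2) = 1 \<and> (\<forall>i>n. x i = 0)}"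
  by (simp add: nsphere)

lemma Hausdorff_space_nsphere: "Hausdorff_space (nsphere n)"
  unfolding nsphere by (intro Hausdorff_space_subtopology) (simp add: Hausdorff_space_product_topology)

locale block_chart = block_frame K n F opp for K :: "'v set set" and n F opp +
  fixes e :: "nat \<Rightarrow> 'v"
  assumes bij_e: "bij_betw e {..n} F"
begin

definition "coord \<alpha> i = (if i \<le> n then \<alpha> (e i) - \<alpha> (opp (e i)) else (0::real))"

definition "coord_norm \<alpha> = sqrt (\<Sum>i\<le>n. (coord \<alpha> i)\<^sup>2)"

definition "sphere_map \<alpha> = (\<lambda>i. coord \<alpha> i / coord_norm \<alpha>)"

lemma F_eq_image: "F = e ` {..n}"
  using bij_e by (simp add: bij_betw_def)

lemma coord_norm_pos:
  assumes "\<alpha> \<in> block_realization"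
  shows "coord_norm \<alpha> > 0"
proof -
  obtain v where "v \<in> F" "\<alpha> v \<noteq> \<alpha> (opp v)"
    using block_realization_differences_nonzero[OF assms] by blast
  then obtain i where "i \<le> n" "coord \<alpha> i \<noteq> 0"
    using F_eq_image by (auto simp: coord_def)
  then have "0 < (coord \<alpha> i)\<^sup>2"
    by simp
  also have "\<dots> \<le> (\<Sum>i\<le>n. (coord \<alpha> i)\<^sup>2)"
    using \<open>i \<le> n\<close> by (intro member_le_sum) auto
  finally show ?thesis
    by (simp add: coord_norm_def)
qed

lemma sphere_map_in_nsphere:
  assumes "\<alpha> \<in> block_realization"
  shows "sphere_map \<alpha> \<in> topspace (nsphere n)"
proof -
  have "(\<Sum>i\<le>n. (sphere_map \<alpha> i)\<^sup>2) = (\<Sum>i\<le>n. (coord \<alpha> i)\<^sup>2) / (coord_norm \<alpha>)\<^sup>2"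
    by (simp add: sphere_map_def power_divide sum_divide_distrib)
  also have "\<dots> = 1"
    using coord_norm_pos[OF assms] by (simp add: coord_norm_def sum_nonneg)
  finally show ?thesis
    by (simp add: topspace_nsphere sphere_map_def coord_def)
qed

lemma inj_on_sphere_map: "inj_on sphere_map block_realization"
proof (rule inj_onI)
  fix \<alpha> \<beta>
  assume \<alpha>: "\<alpha> \<in> block_realization" and \<beta>: "\<beta> \<in> block_realization"
    and eq: "sphere_map \<alpha> = sphere_map \<beta>"
  define t where "t = coord_norm \<alpha> / coord_norm \<beta>"
  have "t > 0"
    using coord_norm_pos[OF \<alpha>] coord_norm_pos[OF \<beta>] by (simp add: t_def)
  have proportional: "coord \<alpha> i = t * coord \<beta> i" for i
  proof -
    have "coord \<alpha> i / coord_norm \<alpha> = coord \<beta> i / coord_norm \<beta>"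
      using fun_cong[OF eq, of i] by (simp add: sphere_map_def)
    then show ?thesis
      using coord_norm_pos[OF \<alpha>] coord_norm_pos[OF \<beta>] by (simp add: t_def divide_simps)
  qed
  have "\<alpha> v - \<alpha> (opp v) = t * (\<beta> v - \<beta> (opp v))" if v: "v \<in> F" for v
  proof -
    obtain i where "i \<le> n" "v = e i"
      using v F_eq_image by blast
    then show ?thesis
      using proportional[of i] by (simp add: coord_def)
  qed
  then show "\<alpha> = \<beta>"
    by (rule block_realization_eq_if_differences_proportional[OF \<alpha> \<beta> \<open>t > 0\<close>])
qed

lemma nsphere_subset_sphere_map_image: "topspace (nsphere n) \<subseteq> sphere_map ` block_realization"
proof
  fix x assume "x \<in> topspace (nsphere n)"
  then have x: "(\<Sum>i\<le>n. (x i)\<^sup>2) = 1" "\<And>i. i > n \<Longrightarrow> x i = 0"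
    by (auto simp: topspace_nsphere)
  define y where "y v = x (inv_into {..n} e v)" for v
  have y_e: "y (e i) = x i" if "i \<le> n" for i
    using bij_betw_inv_into_left[OF bij_e] that by (simp add: y_def)
  have "\<exists>i\<le>n. x i \<noteq> 0"
  proof (rule ccontr)
    assume "\<not> (\<exists>i\<le>n. x i \<noteq> 0)"
    then have "(\<Sum>i\<le>n. (x i)\<^sup>2) = 0"
      by simp
    with x(1) show False
      by simp
  qed
  then have "\<exists>v\<in>F. y v \<noteq> 0"
    using y_e F_eq_image by auto
  then obtain \<alpha> s where \<alpha>: "\<alpha> \<in> block_realization" and "s > 0"
    and differences: "\<And>v. v \<in> F \<Longrightarrow> \<alpha> v - \<alpha> (opp v) = y v / s"
    by (rule block_realization_with_differences) blast
  have coord: "coord \<alpha> i = x i / s" for i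
  proof (cases "i \<le> n")
    case True
    then have "e i \<in> F"
      using F_eq_image by blast
    with True show ?thesis
      using differences y_e by (simp add: coord_def)
  next
    case False
    then show ?thesis
      using x(2) by (simp add: coord_def)
  qed
  have "coord_norm \<alpha> = sqrt (1 / s\<^sup>2)"
    using x(1) by (simp add: coord_norm_def coord power_divide flip: sum_divide_distrib)
  also have "\<dots> = 1 / s"
    using \<open>s > 0\<close> by (simp add: real_sqrt_divide)
  finally have "sphere_map \<alpha> = x"
    using \<open>s > 0\<close> by (simp add: sphere_map_def coord fun_eq_iff)
  with \<alpha> show "x \<in> sphere_map ` block_realization"
    by blast
qed

lemma continuous_map_sphere_map:
  "continuous_map (subtopology (powertop_real UNIV) block_realization) (nsphere n) sphere_map"
proof -
  have coord: "continuous_map (subtopology (powertop_real UNIV) block_realization) euclideanreal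
      (\<lambda>\<alpha>. coord \<alpha> i)" for i
    unfolding coord_def
    by (intro continuous_map_if continuous_map_diff continuous_map_from_subtopology
        continuous_map_product_projection) auto
  then have "continuous_map (subtopology (powertop_real UNIV) block_realization) euclideanreal
      coord_norm"
    unfolding coord_norm_def by (intro continuous_map_sqrt continuous_map_sum continuous_map_real_pow) auto
  then have "continuous_map (subtopology (powertop_real UNIV) block_realization) euclideanreal
      (\<lambda>\<alpha>. sphere_map \<alpha> i)" for i
    unfolding sphere_map_def using coord coord_norm_pos
    by (intro continuous_map_real_divide) (auto dest: coord_norm_pos)
  then show ?thesis
    unfolding nsphere continuous_map_in_subtopology continuous_map_componentwise_UNIV
    using sphere_map_in_nsphere by (auto simp: topspace_nsphere)
qed

lemma geometric_realization_homeomorphic_nsphere: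
  "geometric_realization K homeomorphic_space nsphere n"
proof -
  have geometric_realization_eq:
    "geometric_realization K = subtopology (powertop_real UNIV) block_realization"
    using geometric_realization_eq_subtopology[OF finite_complex face_finite] realization_set_eq
    by simp
  have "compact_space (subtopology (powertop_real UNIV) block_realization)"
    using compactin_realization_set[OF finite_complex face_finite] realization_set_eq
    by (simp add: compact_space_subtopology)
  moreover have "sphere_map ` block_realization = topspace (nsphere n)"
    using sphere_map_in_nsphere nsphere_subset_sphere_map_image by blast
  ultimately have "homeomorphic_map (subtopology (powertop_real UNIV) block_realization)
      (nsphere n) sphere_map"
    using continuous_map_sphere_map Hausdorff_space_nsphere inj_on_sphere_map
    by (intro continuous_imp_homeomorphic_map) auto
  then show ?thesis
    unfolding geometric_realization_eq by (rule homeomorphic_map_imp_homeomorphic_space)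
qed

end

theorem theorem2p3:
  fixes K :: "'v set set" and n :: nat
  assumes "n \<ge> 2"
    and "sc_of_dim K n"
    and "closed_complex K n"
    and "strongly_connected K n"
    and "type_3_4 K n"
  shows "geometric_realization K homeomorphic_space nsphere n"
proof -
  interpret closed_complex_3_4 K n
    using assms by unfold_locales
  obtain \<sigma> where "\<sigma> \<in> K"
    using complex_nonempty by blast
  then obtain F where F: "F \<in> K" "card F = n + 1"
    by (rule face_subset_facet)
  moreover have "n \<noteq> 0"
    using assms(1) by simp
  ultimately obtain opp
    where "\<And>v. v \<in> F \<Longrightarrow> opp v \<notin> F" "\<And>v. v \<in> F \<Longrightarrow> insert (opp v) (F - {v}) \<in> K"
    using ex_opposite_vertices by blast
  moreover obtain e where "bij_betw e {..n} F"
    using ex_bij_betw_nat_finite[OF face_finite[OF F(1)]] F(2)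
    by (auto simp: atLeast0LessThan lessThan_Suc_atMost)
  ultimately interpret block_chart K n F opp e
    using F assms(4) by unfold_locales
  show ?thesis
    by (rule geometric_realization_homeomorphic_nsphere)
qed

end
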